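(* Let $H\in\mathbb{C}^{2N\times2N}$ be Hermitian and let $\mathbb{K}$ be the kernel of $H_\ominus$. Then $\mathbb{K}$ is $J$-invariant, $\dim\mathbb{K}=2l$ is even, $\mathbb{K}$ admits an orthogonal basis $\mathbf{y}_1,\dots,\mathbf{y}_{2l}$ of nonzero vectors with $J(\mathbf{y}_k)=\mathbf{y}_k$ for all $k$, and $\mathbb{K}$ admits an orthonormal basis of the form $\{\mathbf{k}'_1,\dots,\mathbf{k}'_l,J(\mathbf{k}'_1),\dots,J(\mathbf{k}'_l)\}$. Consequently $\mathbb{C}^{2N}$ has an orthonormal basis of eigenvectors of $H_\ominus$ of the form $\{\mathbf{x}_1,\dots,\mathbf{x}_N,J(\mathbf{x}_1),\dots,J(\mathbf{x}_N)\}$ in which every $\mathbf{x}_j$ has eigenvalue $\le 0$.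
   Context: $\Omega=\begin{pmatrix}0&I_N\\ I_N&0\end{pmatrix}\in\mathbb{C}^{2N\times2N}$. $J:\mathbb{C}^{2N}\to\mathbb{C}^{2N}$ is the antilinear map $J(\mathbf{x})=\Omega\mathbf{x}^*$ ($^*$ = entrywise complex conjugation). For a matrix $M$, $M_\ominus:=\tfrac12(M-\Omega M^{\mathrm T}\Omega)$. $\langle\mathbf{x},\mathbf{y}\rangle=\sum_k x_k^*y_k$. *)

theory Defs
  imports "HOL-Analysis.Analysis"
begin

text \<open>Index set of \<open>C^{2N}\<close>: the type \<open>'n + 'n\<close> with \<open>CARD('n) = N\<close>;
  coordinate \<open>Inl k\<close> is the k-th of the first N coordinates, \<open>Inr k\<close> the k-th of the last N.\<close>

fun swp :: "'n + 'n \<Rightarrow> 'n + 'n" where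
  "swp (Inl a) = Inr a"
| "swp (Inr a) = Inl a"

text \<open>\<open>\<Omega> = [[0, I],[I, 0]]\<close>.\<close>
definition Omega :: "complex ^ ('n::finite + 'n) ^ ('n + 'n)" where
  "Omega = (\<chi> i j. if j = swp i then 1 else 0)"

definition cvec_cnj :: "complex ^ 'm \<Rightarrow> complex ^ 'm" where
  "cvec_cnj x = (\<chi> i. cnj (x $ i))"

definition Jmap :: "complex ^ ('n::finite + 'n) \<Rightarrow> complex ^ ('n + 'n)" where
  "Jmap x = Omega *v cvec_cnj x"

definition minus_part :: "complex ^ ('n::finite + 'n) ^ ('n + 'n) \<Rightarrow> complex ^ ('n + 'n) ^ ('n + 'n)" where
  "minus_part M = (\<chi> i j. (M $ i $ j - (Omega ** transpose M ** Omega) $ i $ j) / 2)"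

definition cinner :: "complex ^ 'm::finite \<Rightarrow> complex ^ 'm \<Rightarrow> complex" where
  "cinner x y = (\<Sum>k\<in>UNIV. cnj (x $ k) * y $ k)"

definition hermitian_mat :: "complex ^ 'm ^ 'm \<Rightarrow> bool" where
  "hermitian_mat H \<longleftrightarrow> (\<forall>i j. H $ i $ j = cnj (H $ j $ i))"

definition ker_mat :: "complex ^ 'm::finite ^ 'm \<Rightarrow> (complex ^ 'm) set" where
  "ker_mat M = {x. M *v x = 0}"

end

theory Submission
  imports Defs
begin

text \<open>
  \<open>H\<^sub>\<ominus>\<close> is Hermitian and anticommutes with the antiunitary involution \<open>J\<close>, so \<open>J\<close> maps
  eigenvectors for \<open>\<lambda>\<close> to eigenvectors for \<open>-\<lambda>\<close> and negates the quadratic form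
  \<open>\<langle>v, H\<^sub>\<ominus> v\<rangle>\<close>. An orthonormal eigenbasis \<open>x\<^sub>1, \<dots>, x\<^sub>N, J x\<^sub>1, \<dots>, J x\<^sub>N\<close> is built
  one pair at a time. The orthogonal complement \<open>W\<close> of the pairs found so far is invariant
  under \<open>H\<^sub>\<ominus>\<close> and \<open>J\<close>, and has dimension at least 2 while fewer than \<open>N\<close> pairs are
  known; a maximiser \<open>x\<close> of the quadratic form on the unit sphere of \<open>W\<close>
  is an eigenvector for the maximum \<open>M\<close>, and \<open>M \<ge> 0\<close> because \<open>J\<close> negates the form. If
  \<open>M > 0\<close>, then \<open>J x\<close> is an eigenvector for \<open>-M\<close>, orthogonal to \<open>x = J (J x)\<close> since the
  eigenvalues differ. If \<open>M = 0\<close>, the form vanishes on \<open>W\<close>, so every unit vector of \<open>W\<close> is a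
  maximiser and \<open>H\<^sub>\<ominus>\<close> vanishes on \<open>W\<close>; any unit \<open>x \<in> W\<close> with \<open>\<langle>x, J x\<rangle> = 0\<close> will do,
  e.g. \<open>(u + \<i> w)/\<surd>2\<close> for orthonormal \<open>J\<close>-fixed \<open>u, w \<in> W\<close>.

  The kernel is then spanned by the pairs \<open>x\<^sub>j, J x\<^sub>j\<close> with \<open>H\<^sub>\<ominus> x\<^sub>j = 0\<close>, which gives the
  basis \<open>k\<^sub>i, J k\<^sub>i\<close> and even dimension; the \<open>J\<close>-fixed orthogonal basis consists of the vectors
  \<open>k\<^sub>i + J k\<^sub>i\<close> and \<open>\<i> (k\<^sub>i - J k\<^sub>i)\<close>.
\<close>

section \<open>Coordinates, the inner product and \<open>J\<close>\<close>

lemma swp_swp [simp]: "swp (swp i) = i"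
  by (cases i) auto

lemma sum_reindex_swp: "(\<Sum>k\<in>UNIV. f (swp k)) = (\<Sum>k\<in>UNIV. f k)"
  by (rule sum.reindex_bij_witness[where i = swp and j = swp]) auto

lemma Jmap_nth: "Jmap x $ i = cnj (x $ swp i)"
proof -
  have "(\<Sum>j\<in>UNIV. (if j = swp i then 1 else 0) * cvec_cnj x $ j) = cnj (x $ swp i)"
    by (simp add: cvec_cnj_def if_distrib[of "\<lambda>c. c * _"] cong: if_cong)
  then show ?thesis
    unfolding Jmap_def Omega_def matrix_vector_mult_def by simp
qed

lemma minus_part_nth: "minus_part M $ i $ j = (M $ i $ j - M $ swp j $ swp i) / 2"
proof -
  have swp_eq: "k = swp i \<longleftrightarrow> i = swp k" for i k :: "'a + 'a"
    by (cases i; cases k) auto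
  show ?thesis
    unfolding minus_part_def Omega_def matrix_matrix_mult_def transpose_def
    by (simp add: if_distrib[of "\<lambda>c. c * _"] if_distrib[of "\<lambda>c. _ * c"] swp_eq
      sum_distrib_right cong: if_cong)
qed

lemma cinner_add_left: "cinner (x + y) z = cinner x z + cinner y z"
  unfolding cinner_def by (simp add: distrib_right sum.distrib)

lemma cinner_add_right: "cinner z (x + y) = cinner z x + cinner z y"
  unfolding cinner_def by (simp add: distrib_left sum.distrib)

lemma cinner_diff_left: "cinner (x - y) z = cinner x z - cinner y z"
  unfolding cinner_def by (simp add: left_diff_distrib sum_subtractf)

lemma cinner_diff_right: "cinner z (x - y) = cinner z x - cinner z y"
  unfolding cinner_def by (simp add: right_diff_distrib sum_subtractf)

lemma cinner_scale_left: "cinner (c *s x) y = cnj c * cinner x y"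
  unfolding cinner_def by (simp add: sum_distrib_left mult.assoc)

lemma cinner_scale_right: "cinner x (c *s y) = c * cinner x y"
  unfolding cinner_def by (simp add: sum_distrib_left mult.left_commute)

lemma cinner_minus_left: "cinner (- x) y = - cinner x y"
  unfolding cinner_def by (simp add: sum_negf)

lemma cinner_minus_right: "cinner x (- y) = - cinner x y"
  unfolding cinner_def by (simp add: sum_negf)

lemma cinner_zero_left [simp]: "cinner 0 y = 0"
  unfolding cinner_def by simp

lemma cinner_zero_right [simp]: "cinner x 0 = 0"
  unfolding cinner_def by simp

lemma cinner_sum_right: "cinner x (\<Sum>i\<in>I. f i) = (\<Sum>i\<in>I. cinner x (f i))"
  by (induction I rule: infinite_finite_induct) (auto simp: cinner_add_right)

lemma cinner_commute: "cinner x y = cnj (cinner y x)"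
  unfolding cinner_def by (simp add: mult.commute)

lemma cinner_self: "cinner x x = complex_of_real ((norm x)\<^sup>2)"
proof -
  have "cinner x x = (\<Sum>k\<in>UNIV. complex_of_real ((norm (x $ k))\<^sup>2))"
    unfolding cinner_def complex_norm_square by (simp add: mult.commute)
  also have "\<dots> = complex_of_real ((norm x)\<^sup>2)"
    by (simp add: norm_vec_def L2_set_def sum_nonneg)
  finally show ?thesis .
qed

lemma cinner_self_eq_0 [simp]: "cinner x x = 0 \<longleftrightarrow> x = 0"
  by (simp add: cinner_self)

lemma cinner_self_eq_1_iff: "cinner x x = 1 \<longleftrightarrow> norm x = 1"
proof -
  have "cinner x x = 1 \<longleftrightarrow> (norm x)\<^sup>2 = 1"
    by (simp only: cinner_self of_real_eq_1_iff)
  then show ?thesis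
    using norm_ge_zero[of x] by (auto simp: power2_eq_1_iff)
qed

lemma Jmap_add: "Jmap (x + y) = Jmap x + Jmap y"
  by (simp add: vec_eq_iff Jmap_nth)

lemma Jmap_diff: "Jmap (x - y) = Jmap x - Jmap y"
  by (simp add: vec_eq_iff Jmap_nth)

lemma Jmap_scale: "Jmap (c *s x) = cnj c *s Jmap x"
  by (simp add: vec_eq_iff Jmap_nth)

lemma Jmap_scaleR: "Jmap (r *\<^sub>R x) = r *\<^sub>R Jmap x"
  by (simp add: vec_eq_iff Jmap_nth)

lemma Jmap_Jmap [simp]: "Jmap (Jmap x) = x"
  by (simp add: vec_eq_iff Jmap_nth)

lemma Jmap_zero [simp]: "Jmap 0 = 0"
  by (simp add: vec_eq_iff Jmap_nth)

lemma Jmap_eq_0_iff [simp]: "Jmap x = 0 \<longleftrightarrow> x = 0"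
  by (metis Jmap_Jmap Jmap_zero)

lemma cinner_Jmap_Jmap [simp]: "cinner (Jmap x) (Jmap y) = cinner y x"
proof -
  have "cinner (Jmap x) (Jmap y) = (\<Sum>k\<in>UNIV. (\<lambda>k. cnj (y $ k) * x $ k) (swp k))"
    unfolding cinner_def Jmap_nth by (simp add: mult.commute)
  also have "\<dots> = cinner y x"
    unfolding cinner_def by (rule sum_reindex_swp)
  finally show ?thesis .
qed

lemma cinner_Jmap_right: "cinner x (Jmap y) = cnj (cinner (Jmap x) y)"
  using cinner_Jmap_Jmap[of "Jmap x" y] cinner_commute[of y "Jmap x"] by simp

lemma norm_Jmap [simp]: "norm (Jmap x) = norm x"
proof -
  have "complex_of_real ((norm (Jmap x))\<^sup>2) = complex_of_real ((norm x)\<^sup>2)"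
    by (simp only: cinner_self[symmetric] cinner_Jmap_Jmap)
  then show ?thesis
    by (simp only: of_real_eq_iff power2_eq_iff_nonneg norm_ge_zero)
qed

lemma hermitian_matD: "hermitian_mat A \<Longrightarrow> cnj (A $ i $ j) = A $ j $ i"
  unfolding hermitian_mat_def by (metis complex_cnj_cnj)

lemma cinner_hermitian:
  assumes "hermitian_mat A"
  shows "cinner (A *v x) y = cinner x (A *v y)"
proof -
  have "cinner (A *v x) y = (\<Sum>k\<in>UNIV. \<Sum>j\<in>UNIV. cnj (A $ k $ j) * cnj (x $ j) * y $ k)"
    unfolding cinner_def matrix_vector_mult_def by (simp add: sum_distrib_right)
  also have "\<dots> = (\<Sum>j\<in>UNIV. \<Sum>k\<in>UNIV. cnj (x $ j) * (A $ j $ k * y $ k))"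
    by (subst sum.swap) (simp add: hermitian_matD[OF assms] mult_ac)
  also have "\<dots> = cinner x (A *v y)"
    unfolding cinner_def matrix_vector_mult_def by (simp add: sum_distrib_left)
  finally show ?thesis .
qed

lemma hermitian_minus_part:
  assumes "hermitian_mat H"
  shows "hermitian_mat (minus_part H)"
  unfolding hermitian_mat_def minus_part_nth by (simp add: hermitian_matD[OF assms])

lemma minus_part_Jmap:
  assumes "hermitian_mat H"
  shows "minus_part H *v Jmap x = - Jmap (minus_part H *v x)"
proof -
  have entry: "minus_part H $ i $ j = - cnj (minus_part H $ swp i $ swp j)" for i j
    unfolding minus_part_nth by (simp add: hermitian_matD[OF assms] field_simps)
  have "(minus_part H *v Jmap x) $ i = (- Jmap (minus_part H *v x)) $ i" for i
  proof -
    have "(minus_part H *v Jmap x) $ i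
        = (\<Sum>j\<in>UNIV. (\<lambda>j. - cnj (minus_part H $ swp i $ j) * cnj (x $ j)) (swp j))"
      unfolding matrix_vector_mult_def Jmap_nth by (simp add: entry[of i])
    also have "\<dots> = (\<Sum>j\<in>UNIV. - cnj (minus_part H $ swp i $ j) * cnj (x $ j))"
      by (rule sum_reindex_swp)
    also have "\<dots> = (- Jmap (minus_part H *v x)) $ i"
      by (simp add: matrix_vector_mult_def Jmap_nth sum_negf)
    finally show ?thesis .
  qed
  then show ?thesis
    by (simp add: vec_eq_iff)
qed

section \<open>Subspaces and orthonormal families\<close>

lemma of_real_scale_eq_scaleR: "complex_of_real r *s (v :: complex^'m) = r *\<^sub>R v"
  unfolding scaleR_vec_def vector_scalar_mult_def by (simp add: scaleR_conv_of_real)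

lemma vec_subspace_scaleR: "vec.subspace W \<Longrightarrow> v \<in> W \<Longrightarrow> r *\<^sub>R (v :: complex^'m) \<in> W"
  unfolding of_real_scale_eq_scaleR[symmetric] by (rule vec.subspace_scale)

lemma closed_vec_subspace:
  fixes W :: "(complex^'m) set"
  assumes "vec.subspace W"
  shows "closed W"
proof (rule closed_subspace)
  show "subspace W"
    using assms by (simp add: subspace_def vec.subspace_0 vec.subspace_add vec_subspace_scaleR)
qed

definition orth_compl :: "(complex^'m) set \<Rightarrow> (complex^'m) set" where
  "orth_compl B = {v. \<forall>b\<in>B. cinner b v = 0}"

lemma subspace_orth_compl: "vec.subspace (orth_compl B)"
  unfolding orth_compl_def
  by (rule vec.subspaceI) (auto simp: cinner_add_right cinner_scale_right)

lemma cinner_span_orth_compl: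
  assumes "u \<in> vec.span B" "v \<in> orth_compl B"
  shows "cinner u v = 0"
  using assms(1)
proof (rule vec.span_induct)
  show "vec.subspace {u. cinner u v = 0}"
    by (rule vec.subspaceI) (auto simp: cinner_add_left cinner_scale_left)
qed (use assms(2) in \<open>auto simp: orth_compl_def\<close>)

lemma orth_compl_invariant_eigenvectors:
  assumes "hermitian_mat A" and eig: "\<And>b. b \<in> B \<Longrightarrow> \<exists>\<mu>::real. A *v b = complex_of_real \<mu> *s b"
    and "v \<in> orth_compl B"
  shows "A *v v \<in> orth_compl B"
  unfolding orth_compl_def
proof safe
  fix b
  assume "b \<in> B"
  then obtain \<mu> :: real where "A *v b = complex_of_real \<mu> *s b"
    using eig by blast
  then have "cinner b (A *v v) = complex_of_real \<mu> * cinner b v"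
    by (simp add: cinner_hermitian[OF assms(1), symmetric] cinner_scale_left)
  then show "cinner b (A *v v) = 0"
    using \<open>b \<in> B\<close> assms(3) by (simp add: orth_compl_def)
qed

lemma orth_compl_invariant_Jmap:
  assumes "\<And>b. b \<in> B \<Longrightarrow> Jmap b \<in> B" and "v \<in> orth_compl B"
  shows "Jmap v \<in> orth_compl B"
  using assms by (auto simp: orth_compl_def cinner_Jmap_right)

lemma pairwise_orthogonal_independent:
  assumes fin: "finite S" and nonzero: "0 \<notin> S"
    and orth: "\<And>u v. u \<in> S \<Longrightarrow> v \<in> S \<Longrightarrow> u \<noteq> v \<Longrightarrow> cinner u v = 0"
  shows "vec.independent S"
proof
  assume "vec.dependent S"
  then obtain c u where u: "u \<in> S" "c u \<noteq> 0" and comb: "(\<Sum>v\<in>S. c v *s v) = 0"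
    unfolding vec.dependent_finite[OF fin] by blast
  have "0 = cinner u (\<Sum>v\<in>S. c v *s v)"
    by (simp add: comb)
  also have "\<dots> = (\<Sum>v\<in>S. if v = u then c u * cinner u u else 0)"
    unfolding cinner_sum_right using orth u(1) by (intro sum.cong) (auto simp: cinner_scale_right)
  also have "\<dots> = c u * cinner u u"
    using fin u(1) by simp
  finally show False
    using u nonzero by auto
qed

definition orthonormal_on :: "('i \<Rightarrow> complex^'m) \<Rightarrow> 'i set \<Rightarrow> bool" where
  "orthonormal_on b I \<longleftrightarrow> (\<forall>i\<in>I. \<forall>j\<in>I. cinner (b i) (b j) = (if i = j then 1 else 0))"

lemma orthonormal_on_inj_on: "orthonormal_on b I \<Longrightarrow> inj_on b I"
  unfolding orthonormal_on_def inj_on_def by (metis one_neq_zero)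

lemma orthonormal_on_compose:
  assumes "orthonormal_on b J" "inj_on g I" "g ` I \<subseteq> J"
  shows "orthonormal_on (b \<circ> g) I"
  using assms by (simp add: orthonormal_on_def inj_on_eq_iff image_subset_iff)

lemma orthonormal_on_independent:
  assumes "finite I" "orthonormal_on b I"
  shows "vec.independent (b ` I)"
proof (rule pairwise_orthogonal_independent)
  show "0 \<notin> b ` I"
    using assms(2) unfolding orthonormal_on_def by (metis cinner_zero_left image_iff zero_neq_one)
qed (use assms in \<open>auto simp: orthonormal_on_def\<close>)

lemma dim_span_orthonormal_on:
  assumes "finite I" "orthonormal_on b I"
  shows "vec.dim (vec.span (b ` I)) = card I"
  using vec.dim_span_eq_card_independent[OF orthonormal_on_independent[OF assms]]
    card_image[OF orthonormal_on_inj_on[OF assms(2)]] by simp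

lemma span_orthonormal_on_UNIV:
  fixes b :: "'i \<Rightarrow> complex^'m"
  assumes "finite I" "orthonormal_on b I" "card I = CARD('m)"
  shows "vec.span (b ` I) = UNIV"
proof -
  have "vec.dim (UNIV :: (complex^'m) set) \<le> card (b ` I)"
    unfolding vec_dim_card using assms card_image[OF orthonormal_on_inj_on[OF assms(2)]] by simp
  then show ?thesis
    using vec.card_ge_dim_independent[OF _ orthonormal_on_independent[OF assms(1,2)]] by blast
qed

lemma orthonormal_on_residual:
  assumes "finite I" "orthonormal_on b I"
  shows "v - (\<Sum>i\<in>I. cinner (b i) v *s b i) \<in> orth_compl (b ` I)"
proof -
  have "cinner (b j) (\<Sum>i\<in>I. cinner (b i) v *s b i) = cinner (b j) v" if "j \<in> I" for j
  proof -
    have "cinner (b j) (\<Sum>i\<in>I. cinner (b i) v *s b i)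
        = (\<Sum>i\<in>I. if j = i then cinner (b i) v else 0)"
      unfolding cinner_sum_right cinner_scale_right using assms(2) that
      by (intro sum.cong) (auto simp: orthonormal_on_def)
    then show ?thesis
      using assms(1) that by simp
  qed
  then show ?thesis
    by (auto simp: orth_compl_def cinner_diff_right)
qed

lemma orthonormal_on_expansion:
  assumes "finite I" "orthonormal_on b I" "v \<in> vec.span (b ` I)"
  shows "v = (\<Sum>i\<in>I. cinner (b i) v *s b i)"
proof -
  define r where "r = v - (\<Sum>i\<in>I. cinner (b i) v *s b i)"
  have "r \<in> vec.span (b ` I)"
    unfolding r_def using assms(3)
    by (intro vec.span_diff[OF assms(3)] vec.span_sum vec.span_scale vec.span_base) auto
  then have "cinner r r = 0"
    using orthonormal_on_residual[OF assms(1,2)] by (simp add: r_def cinner_span_orth_compl)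
  then show ?thesis
    by (simp add: r_def)
qed

lemma orth_compl_not_subset_line:
  fixes b :: "'i \<Rightarrow> complex^'m"
  assumes "finite I" "orthonormal_on b I" "card I + 2 \<le> CARD('m)"
  shows "\<not> orth_compl (b ` I) \<subseteq> vec.span {w}"
proof
  assume line: "orth_compl (b ` I) \<subseteq> vec.span {w}"
  have "v \<in> vec.span (insert w (b ` I))" for v
  proof -
    define p where "p = (\<Sum>i\<in>I. cinner (b i) v *s b i)"
    have "v - p \<in> vec.span (insert w (b ` I))"
      using line orthonormal_on_residual[OF assms(1,2), of v] vec.span_mono[of "{w}"]
      unfolding p_def by blast
    moreover have "p \<in> vec.span (insert w (b ` I))"
      unfolding p_def by (intro vec.span_sum vec.span_scale vec.span_base) auto
    ultimately show ?thesis
      using vec.span_add by fastforce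
  qed
  then have "vec.dim (UNIV :: (complex^'m) set) \<le> card (insert w (b ` I))"
    using assms(1) by (intro vec.dim_le_card) auto
  also have "\<dots> \<le> card I + 1"
    using assms(1) card_image_le[OF assms(1), of b] by (simp add: card_insert_if)
  finally show False
    using assms(3) unfolding vec_dim_card by simp
qed

lemma ker_mat_eq_span_null_basis:
  assumes herm: "hermitian_mat A" and "finite I" and ON: "orthonormal_on b I"
    and spans: "vec.span (b ` I) = UNIV"
    and eig: "\<And>i. i \<in> I \<Longrightarrow> \<exists>\<mu>. A *v b i = \<mu> *s b i"
  shows "ker_mat A = vec.span (b ` {i \<in> I. A *v b i = 0})"
proof
  show "vec.span (b ` {i \<in> I. A *v b i = 0}) \<subseteq> ker_mat A"
    unfolding ker_mat_def by (intro vec.span_minimal vec.subspace_kernel) auto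
next
  show "ker_mat A \<subseteq> vec.span (b ` {i \<in> I. A *v b i = 0})"
  proof
    fix v
    assume v: "v \<in> ker_mat A"
    have "cinner (b i) v *s b i \<in> vec.span (b ` {i \<in> I. A *v b i = 0})" if i: "i \<in> I" for i
    proof (cases "A *v b i = 0")
      case True
      with i show ?thesis
        by (intro vec.span_scale vec.span_base) auto
    next
      case False
      obtain \<mu> where \<mu>: "A *v b i = \<mu> *s b i"
        using eig[OF i] by blast
      have "cnj \<mu> * cinner (b i) v = cinner (b i) (A *v v)"
        by (simp add: \<mu> cinner_hermitian[OF herm, symmetric] cinner_scale_left)
      then have "cinner (b i) v = 0"
        using v False \<mu> by (simp add: ker_mat_def)
      then show ?thesis
        by (simp add: vec.span_zero)
    qed
    then have "(\<Sum>i\<in>I. cinner (b i) v *s b i) \<in> vec.span (b ` {i \<in> I. A *v b i = 0})"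
      by (rule vec.span_sum)
    then show "v \<in> vec.span (b ` {i \<in> I. A *v b i = 0})"
      using orthonormal_on_expansion[OF \<open>finite I\<close> ON, of v] spans by simp
  qed
qed

section \<open>Maximising a Hermitian form on a subspace\<close>

definition quad_form :: "complex^'m^'m \<Rightarrow> complex^'m \<Rightarrow> real" where
  "quad_form A v = Re (cinner v (A *v v))"

lemma cinner_quad_form:
  assumes "hermitian_mat A"
  shows "cinner v (A *v v) = complex_of_real (quad_form A v)"
proof -
  have "cnj (cinner v (A *v v)) = cinner v (A *v v)"
    using cinner_commute[of "A *v v" v] cinner_hermitian[OF assms, of v v] by simp
  then show ?thesis
    unfolding quad_form_def by (metis Reals_cnj_iff of_real_Re)
qed

lemma quad_form_scale: "quad_form A (c *s v) = (cmod c)\<^sup>2 * quad_form A v"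
proof -
  have "cinner (c *s v) (A *v (c *s v)) = (cnj c * c) * cinner v (A *v v)"
    by (simp add: vector_scalar_commute cinner_scale_left cinner_scale_right mult.assoc)
  also have "cnj c * c = complex_of_real ((cmod c)\<^sup>2)"
    using complex_norm_square[of c] by (simp add: mult.commute)
  finally show ?thesis
    unfolding quad_form_def by simp
qed

lemma quad_form_scaleR: "quad_form A (r *\<^sub>R v) = r\<^sup>2 * quad_form A v"
  using quad_form_scale[of A "complex_of_real r" v] by (simp add: of_real_scale_eq_scaleR)

lemma continuous_on_quad_form: "continuous_on S (quad_form A)"
  unfolding quad_form_def cinner_def matrix_vector_mult_def
  by (intro continuous_intros)

lemma quad_form_max_on_subspace:
  fixes W :: "(complex^'m) set"
  assumes W: "vec.subspace W" and nontrivial: "W \<noteq> {0}"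
  obtains x where "x \<in> W" "norm x = 1"
    "\<And>y. y \<in> W \<Longrightarrow> quad_form A y \<le> quad_form A x * (norm y)\<^sup>2"
proof -
  have normalize: "(1 / norm v) *\<^sub>R v \<in> W \<inter> sphere 0 1" if "v \<in> W" "v \<noteq> 0" for v
    using that vec_subspace_scaleR[OF W] by simp
  have "compact (W \<inter> sphere 0 1)"
    by (intro closed_Int_compact closed_vec_subspace W compact_sphere)
  moreover obtain v where "v \<in> W" "v \<noteq> 0"
    using nontrivial vec.subspace_0[OF W] by blast
  then have "W \<inter> sphere 0 1 \<noteq> {}"
    using normalize by blast
  ultimately obtain x where x: "x \<in> W \<inter> sphere 0 1"
    and max: "\<And>u. u \<in> W \<inter> sphere 0 1 \<Longrightarrow> quad_form A u \<le> quad_form A x"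
    using continuous_attains_sup[OF _ _ continuous_on_quad_form] by metis
  have "quad_form A y \<le> quad_form A x * (norm y)\<^sup>2" if "y \<in> W" for y
  proof (cases "y = 0")
    case True
    then show ?thesis
      by (simp add: quad_form_def)
  next
    case False
    have "quad_form A y / (norm y)\<^sup>2 = quad_form A ((1 / norm y) *\<^sub>R y)"
      by (simp add: quad_form_scaleR power_divide)
    also have "\<dots> \<le> quad_form A x"
      using max normalize[OF that False] by blast
    finally show ?thesis
      using False by (simp add: divide_le_eq)
  qed
  moreover have "x \<in> W" "norm x = 1"
    using x by auto
  ultimately show ?thesis
    using that by blast
qed

lemma linear_coeff_eq_0_if_quadratic_nonpos:
  fixes a c :: real
  assumes nonpos: "\<And>t. t * a + t\<^sup>2 * c \<le> 0"
  shows "a = 0"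
proof (rule ccontr)
  assume "a \<noteq> 0"
  define k where "k = \<bar>c\<bar> + 1"
  define t where "t = a / k"
  have "k > 0"
    unfolding k_def by simp
  have "t * a - t\<^sup>2 * \<bar>c\<bar> = t * a - t\<^sup>2 * (k - 1)"
    unfolding k_def by simp
  also have "\<dots> = (a / k)\<^sup>2"
    unfolding t_def using \<open>k > 0\<close> by (simp add: field_simps power2_eq_square)
  also have "\<dots> > 0"
    using \<open>a \<noteq> 0\<close> \<open>k > 0\<close> by simp
  finally have "0 < t * a - t\<^sup>2 * \<bar>c\<bar>" .
  moreover have "- (t\<^sup>2 * \<bar>c\<bar>) \<le> t\<^sup>2 * c"
    using mult_left_mono[of "- \<bar>c\<bar>" c "t\<^sup>2"] by simp
  ultimately show False
    using nonpos[of t] by linarith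
qed

text \<open>First variation of the Rayleigh quotient: for \<open>d = A x - M x\<close> and real \<open>t\<close>, the
  maximality of \<open>x\<close> at \<open>x + t d\<close> reads \<open>2 t \<parallel>d\<parallel>\<^sup>2 + t\<^sup>2 c \<le> 0\<close> for a constant \<open>c\<close>,
  which forces \<open>d = 0\<close>.\<close>
lemma quad_form_max_eigenvector:
  assumes herm: "hermitian_mat A" and W: "vec.subspace W"
    and invariant: "\<And>v. v \<in> W \<Longrightarrow> A *v v \<in> W"
    and x: "x \<in> W" "norm x = 1"
    and max: "\<And>y. y \<in> W \<Longrightarrow> quad_form A y \<le> quad_form A x * (norm y)\<^sup>2"
  shows "A *v x = complex_of_real (quad_form A x) *s x"
proof -
  define M where "M = complex_of_real (quad_form A x)"
  define d where "d = A *v x - M *s x"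
  define e where "e = A *v d - M *s d"
  have cnj_M: "cnj M = M"
    unfolding M_def by simp
  have d_W: "d \<in> W"
    unfolding d_def using W x invariant by (intro vec.subspace_diff vec.subspace_scale) auto
  have x_d: "cinner x d = 0"
    using x(2) unfolding d_def
    by (simp add: cinner_diff_right cinner_scale_right cinner_quad_form[OF herm] M_def
        cinner_self_eq_1_iff[symmetric])
  have "cinner d d = cinner (A *v x) d - M * cinner x d"
    using cinner_diff_left[of "A *v x" "M *s x" d]
    by (simp add: d_def[symmetric] cinner_scale_left cnj_M)
  then have x_e: "cinner x e = cinner d d"
    unfolding e_def
    by (simp add: cinner_diff_right cinner_scale_right cinner_hermitian[OF herm])
  have "t * (2 * (norm d)\<^sup>2) + t\<^sup>2 * Re (cinner d e) \<le> 0" for t :: real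
  proof -
    define z where "z = x + complex_of_real t *s d"
    have "z \<in> W"
      unfolding z_def using W x d_W by (intro vec.subspace_add vec.subspace_scale) auto
    then have "Re (cinner z (A *v z - M *s z)) \<le> 0"
      using max[of z]
      by (simp add: cinner_diff_right cinner_scale_right cinner_self quad_form_def M_def)
    moreover have "A *v z - M *s z = d + complex_of_real t *s e"
      unfolding z_def d_def e_def
      by (simp add: matrix_vector_right_distrib vector_scalar_commute vec_eq_iff algebra_simps)
    moreover have "cinner z (d + complex_of_real t *s e)
        = complex_of_real (t * (2 * (norm d)\<^sup>2)) + complex_of_real (t\<^sup>2) * cinner d e"
      unfolding z_def
      by (simp add: cinner_add_left cinner_add_right cinner_scale_left cinner_scale_right x_d x_e
          cinner_self algebra_simps power2_eq_square)
    ultimately show ?thesis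
      by simp
  qed
  then have "2 * (norm d)\<^sup>2 = 0"
    by (rule linear_coeff_eq_0_if_quadratic_nonpos)
  then show ?thesis
    unfolding d_def M_def by simp
qed

section \<open>\<open>J\<close>-fixed vectors and \<open>J\<close>-pairs\<close>

lemma exists_Jmap_fixed_unit:
  assumes W: "vec.subspace W" and J_W: "\<And>v. v \<in> W \<Longrightarrow> Jmap v \<in> W"
    and z: "z \<in> W" "z \<noteq> 0"
  obtains u where "u \<in> W" "Jmap u = u" "norm u = 1"
proof -
  obtain u0 where u0: "u0 \<in> W" "Jmap u0 = u0" "u0 \<noteq> 0"
  proof (cases "z + Jmap z = 0")
    case False
    show ?thesis
      using False W z J_W by (intro that[of "z + Jmap z"]) (auto simp: Jmap_add vec.subspace_add)
  next
    case True
    then have "Jmap z = - z"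
      by (simp add: add_eq_0_iff)
    then show ?thesis
      using W z by (intro that[of "\<i> *s z"]) (auto simp: Jmap_scale vec.subspace_scale vec_eq_iff)
  qed
  show ?thesis
  proof (rule that[of "(1 / norm u0) *\<^sub>R u0"])
    show "(1 / norm u0) *\<^sub>R u0 \<in> W"
      using W u0(1) by (rule vec_subspace_scaleR)
  qed (use u0 in \<open>simp_all add: Jmap_scaleR\<close>)
qed

lemma exists_unit_orthogonal_to_Jmap:
  assumes W: "vec.subspace W" and J_W: "\<And>v. v \<in> W \<Longrightarrow> Jmap v \<in> W"
    and not_line: "\<And>w. \<not> W \<subseteq> vec.span {w}"
  obtains x where "x \<in> W" "norm x = 1" "cinner x (Jmap x) = 0"
proof -
  obtain v0 where "v0 \<in> W" "v0 \<noteq> 0"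
    using not_line[of 0] by auto
  then obtain u where u: "u \<in> W" "Jmap u = u" "norm u = 1"
    using exists_Jmap_fixed_unit[OF W J_W] by blast
  define W' where "W' = W \<inter> {v. cinner u v = 0}"
  have W': "vec.subspace W'"
    unfolding W'_def using W
    by (intro vec.subspace_inter[OF W] vec.subspaceI) (auto simp: cinner_add_right cinner_scale_right)
  have J_W': "Jmap v \<in> W'" if "v \<in> W'" for v
    using that J_W u(2) by (auto simp: W'_def cinner_Jmap_right)
  obtain v where v: "v \<in> W" "v \<notin> vec.span {u}"
    using not_line[of u] by auto
  define z where "z = v - cinner u v *s u"
  have "z \<in> W'"
    unfolding W'_def z_def using W v(1) u
    by (auto simp: vec.subspace_diff vec.subspace_scale cinner_diff_right cinner_scale_right
        cinner_self_eq_1_iff[symmetric])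
  moreover have "z \<noteq> 0"
    using v(2) vec.span_scale[OF vec.span_base[OF singletonI[of u]], of "cinner u v"]
    unfolding z_def by auto
  ultimately obtain w where w: "w \<in> W'" "Jmap w = w" "norm w = 1"
    using exists_Jmap_fixed_unit[OF W' J_W'] by blast
  have uu: "cinner u u = 1" and ww: "cinner w w = 1" and uw: "cinner u w = 0"
    and wu: "cinner w u = 0"
    using u w cinner_commute[of w u] by (auto simp: W'_def cinner_self_eq_1_iff)
  have plus_plus: "cinner (u + \<i> *s w) (u + \<i> *s w) = 2"
    and plus_minus: "cinner (u + \<i> *s w) (u - \<i> *s w) = 0"
    by (simp_all add: cinner_add_left cinner_add_right cinner_diff_right cinner_scale_left
        cinner_scale_right uu ww uw wu)
  define c where "c = complex_of_real (1 / sqrt 2)"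
  have cc: "cnj c * c = 1 / 2"
    unfolding c_def by (simp flip: of_real_mult)
  define x where "x = c *s (u + \<i> *s w)"
  have Jx: "Jmap x = c *s (u - \<i> *s w)"
    unfolding x_def c_def by (simp add: Jmap_scale Jmap_add u(2) w(2))
  show ?thesis
  proof (rule that[of x])
    show "x \<in> W"
      unfolding x_def using W u(1) w(1) by (auto simp: W'_def vec.subspace_add vec.subspace_scale)
    have "cinner x x = 1"
      unfolding x_def cinner_scale_left cinner_scale_right plus_plus
      using cc by (simp add: mult.assoc[symmetric] mult.commute[of c])
    then show "norm x = 1"
      by (simp add: cinner_self_eq_1_iff)
    show "cinner x (Jmap x) = 0"
      unfolding Jx unfolding x_def cinner_scale_left cinner_scale_right plus_minus by simp
  qed
qed

definition Jpair :: "('i \<Rightarrow> complex^('n::finite + 'n)) \<Rightarrow> 'i + 'i \<Rightarrow> complex^('n + 'n)" where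
  "Jpair x p = (case p of Inl j \<Rightarrow> x j | Inr j \<Rightarrow> Jmap (x j))"

lemma Jpair_simps [simp]: "Jpair x (Inl j) = x j" "Jpair x (Inr j) = Jmap (x j)"
  by (simp_all add: Jpair_def)

lemma ball_Plus: "(\<forall>p\<in>A <+> B. P p) \<longleftrightarrow> (\<forall>a\<in>A. P (Inl a)) \<and> (\<forall>b\<in>B. P (Inr b))"
  by auto

lemma orthonormal_on_Jpair_iff:
  "orthonormal_on (Jpair x) (I <+> I) \<longleftrightarrow>
    (\<forall>i\<in>I. \<forall>j\<in>I. cinner (x i) (x j) = (if i = j then 1 else 0) \<and> cinner (x i) (Jmap (x j)) = 0)"
proof -
  have "cinner (Jmap (x i)) (x j) = cnj (cinner (x j) (Jmap (x i)))" for i j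
    by (rule cinner_commute)
  then show ?thesis
    unfolding orthonormal_on_def ball_Plus by auto
qed

lemma Jmap_Jpair_image:
  assumes "b \<in> Jpair x ` (I <+> I)"
  shows "Jmap b \<in> Jpair x ` (I <+> I)"
proof -
  obtain p where p: "p \<in> I <+> I" "b = Jpair x p"
    using assms by blast
  show ?thesis
  proof (cases p)
    case (Inl i)
    with p show ?thesis
      by (intro rev_image_eqI[of "Inr i"]) auto
  next
    case (Inr i)
    with p show ?thesis
      by (intro rev_image_eqI[of "Inl i"]) auto
  qed
qed

lemma orthonormal_on_Jpair_insert:
  assumes ON: "orthonormal_on (Jpair x) (F <+> F)" and "a \<notin> F"
    and orth: "v \<in> orth_compl (Jpair x ` (F <+> F))"
    and unit: "norm v = 1" and orth_J: "cinner v (Jmap v) = 0"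
  shows "orthonormal_on (Jpair (x(a := v))) (insert a F <+> insert a F)"
proof -
  have xv: "cinner (x j) v = 0" and Jxv: "cinner (Jmap (x j)) v = 0" if "j \<in> F" for j
    using orth that by (auto simp: orth_compl_def ball_Plus)
  then have "cinner v (x j) = 0" "cinner v (Jmap (x j)) = 0" "cinner (x j) (Jmap v) = 0"
    if "j \<in> F" for j
    using that xv Jxv cinner_commute[of v] cinner_Jmap_right[of "x j" v] by simp_all
  moreover have "cinner v v = 1"
    using unit by (simp add: cinner_self_eq_1_iff)
  ultimately show ?thesis
    using ON \<open>a \<notin> F\<close> orth_J xv unfolding orthonormal_on_Jpair_iff by auto
qed

lemma bij_betw_split_Plus:
  fixes l :: nat
  assumes e: "bij_betw e {..<l} Z"
  shows "bij_betw (\<lambda>k. if k < l then Inl (e k) else Inr (e (k - l))) {..<2 * l} (Z <+> Z)"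
  unfolding bij_betw_def
proof
  have "e j = e k \<longleftrightarrow> j = k" if "j < l" "k < l" for j k
    using e that by (auto simp: bij_betw_def inj_on_def)
  then show "inj_on (\<lambda>k. if k < l then Inl (e k) else Inr (e (k - l))) {..<2 * l}"
    unfolding inj_on_def by (auto split: if_splits)
  have "Inl z \<in> (\<lambda>k. if k < l then Inl (e k) else Inr (e (k - l))) ` {..<2 * l}"
    and "Inr z \<in> (\<lambda>k. if k < l then Inl (e k) else Inr (e (k - l))) ` {..<2 * l}" if z: "z \<in> Z" for z
  proof -
    obtain k where "k < l" "z = e k"
      using e z unfolding bij_betw_def by blast
    then show "Inl z \<in> (\<lambda>k. if k < l then Inl (e k) else Inr (e (k - l))) ` {..<2 * l}"
      and "Inr z \<in> (\<lambda>k. if k < l then Inl (e k) else Inr (e (k - l))) ` {..<2 * l}"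
      by (auto intro: rev_image_eqI[of k] rev_image_eqI[of "k + l"])
  qed
  moreover have "e k \<in> Z" if "k < l" for k
    using e that by (auto simp: bij_betw_def)
  ultimately show "(\<lambda>k. if k < l then Inl (e k) else Inr (e (k - l))) ` {..<2 * l} = Z <+> Z"
    by (auto simp: image_iff)
qed

definition J_extend :: "(nat \<Rightarrow> complex^('n::finite + 'n)) \<Rightarrow> nat \<Rightarrow> nat \<Rightarrow> complex^('n + 'n)"
  where "J_extend kp l k = (if k < l then kp k else Jmap (kp (k - l)))"

lemma orthonormal_on_J_extendD:
  assumes "orthonormal_on (J_extend kp l) {..<2 * l}" "i < l" "j < l"
  shows "cinner (kp i) (kp j) = (if i = j then 1 else 0)"
    and "cinner (kp i) (Jmap (kp j)) = 0"
    and "cinner (Jmap (kp i)) (kp j) = 0"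
    and "cinner (Jmap (kp i)) (Jmap (kp j)) = (if i = j then 1 else 0)"
proof -
  have "cinner (J_extend kp l i') (J_extend kp l j') = (if i' = j' then 1 else 0)"
    if "i' < 2 * l" "j' < 2 * l" for i' j'
    using assms(1) that by (simp add: orthonormal_on_def)
  from this[of i j] this[of i "j + l"] this[of "i + l" j] this[of "i + l" "j + l"] assms(2,3)
  show "cinner (kp i) (kp j) = (if i = j then 1 else 0)"
    and "cinner (kp i) (Jmap (kp j)) = 0"
    and "cinner (Jmap (kp i)) (kp j) = 0"
    and "cinner (Jmap (kp i)) (Jmap (kp j)) = (if i = j then 1 else 0)"
    by (simp_all add: J_extend_def)
qed

definition J_fixed_of :: "(nat \<Rightarrow> complex^('n::finite + 'n)) \<Rightarrow> nat \<Rightarrow> complex^('n + 'n)"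
  where "J_fixed_of kp k = (if even k then kp (k div 2) + Jmap (kp (k div 2))
    else \<i> *s kp (k div 2) - \<i> *s Jmap (kp (k div 2)))"

lemma Jmap_J_fixed_of: "Jmap (J_fixed_of kp k) = J_fixed_of kp k"
  by (simp add: J_fixed_of_def Jmap_add Jmap_diff Jmap_scale vec_eq_iff algebra_simps)

lemma cinner_J_fixed_of:
  assumes ON: "orthonormal_on (J_extend kp l) {..<2 * l}" and "j < 2 * l" "k < 2 * l"
  shows "cinner (J_fixed_of kp j) (J_fixed_of kp k) = (if j = k then 2 else 0)"
proof -
  have "j div 2 < l" "k div 2 < l"
    using assms(2,3) by auto
  note ON_pairs = orthonormal_on_J_extendD[OF ON this]
  have "j = k \<longleftrightarrow> j div 2 = k div 2 \<and> (even j \<longleftrightarrow> even k)"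
    by (metis div_mult_mod_eq even_iff_mod_2_eq_zero odd_iff_mod_2_eq_one)
  with ON_pairs show ?thesis
    unfolding J_fixed_of_def
    by (cases "even j"; cases "even k")
      (auto simp: cinner_add_left cinner_add_right cinner_diff_left cinner_diff_right
        cinner_scale_left cinner_scale_right)
qed

lemma span_J_fixed_of:
  "vec.span (J_fixed_of kp ` {..<2 * l}) = vec.span (J_extend kp l ` {..<2 * l})"
proof -
  have pair_in_span: "kp i \<in> vec.span (J_extend kp l ` {..<2 * l})"
      "Jmap (kp i) \<in> vec.span (J_extend kp l ` {..<2 * l})" if "i < l" for i
  proof -
    show "kp i \<in> vec.span (J_extend kp l ` {..<2 * l})"
      using that by (intro vec.span_base rev_image_eqI[of i]) (auto simp: J_extend_def)
    show "Jmap (kp i) \<in> vec.span (J_extend kp l ` {..<2 * l})"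
      using that by (intro vec.span_base rev_image_eqI[of "i + l"]) (auto simp: J_extend_def)
  qed
  have "J_fixed_of kp k \<in> vec.span (J_extend kp l ` {..<2 * l})" if "k < 2 * l" for k
  proof -
    have "k div 2 < l"
      using that by auto
    from pair_in_span[OF this] show ?thesis
      unfolding J_fixed_of_def by (auto intro!: vec.span_add vec.span_diff vec.span_scale)
  qed
  moreover have "J_extend kp l k \<in> vec.span (J_fixed_of kp ` {..<2 * l})" if "k < 2 * l" for k
  proof -
    define i where "i = (if k < l then k else k - l)"
    have "i < l"
      using that unfolding i_def by auto
    then have fixed_even: "J_fixed_of kp (2 * i) \<in> vec.span (J_fixed_of kp ` {..<2 * l})"
      and fixed_odd: "J_fixed_of kp (2 * i + 1) \<in> vec.span (J_fixed_of kp ` {..<2 * l})"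
      by (auto intro!: vec.span_base)
    have "kp i = (1 / 2) *s (J_fixed_of kp (2 * i) - \<i> *s J_fixed_of kp (2 * i + 1))"
      and "Jmap (kp i) = (1 / 2) *s (J_fixed_of kp (2 * i) + \<i> *s J_fixed_of kp (2 * i + 1))"
      unfolding J_fixed_of_def by (simp_all add: vec_eq_iff algebra_simps)
    then have "kp i \<in> vec.span (J_fixed_of kp ` {..<2 * l})"
      "Jmap (kp i) \<in> vec.span (J_fixed_of kp ` {..<2 * l})"
      using fixed_even fixed_odd by (metis vec.span_add vec.span_diff vec.span_scale)+
    then show ?thesis
      by (auto simp: J_extend_def i_def)
  qed
  ultimately show ?thesis
    unfolding vec.span_eq by auto
qed

section \<open>Hermitian matrices anticommuting with \<open>J\<close>\<close>

locale J_anticommuting_hermitian =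
  fixes A :: "complex^('n::finite + 'n)^('n + 'n)"
  assumes hermitian: "hermitian_mat A"
    and anticommutes_Jmap: "A *v Jmap x = - Jmap (A *v x)"
begin

lemma quad_form_Jmap: "quad_form A (Jmap v) = - quad_form A v"
proof -
  have "cinner (Jmap v) (A *v Jmap v) = - cinner v (A *v v)"
    by (simp add: anticommutes_Jmap cinner_minus_right cinner_hermitian[OF hermitian])
  then show ?thesis
    unfolding quad_form_def by simp
qed

lemma eigenvector_Jmap:
  assumes "A *v v = complex_of_real \<mu> *s v"
  shows "A *v Jmap v = complex_of_real (- \<mu>) *s Jmap v"
proof -
  have "A *v Jmap v = - (complex_of_real \<mu> *s Jmap v)"
    using assms by (simp add: anticommutes_Jmap Jmap_scale)
  then show ?thesis
    by (simp add: vec_eq_iff)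
qed

lemma exists_nonpos_eigenvector_orthogonal_to_Jmap:
  assumes W: "vec.subspace W" and A_W: "\<And>v. v \<in> W \<Longrightarrow> A *v v \<in> W"
    and J_W: "\<And>v. v \<in> W \<Longrightarrow> Jmap v \<in> W" and not_line: "\<And>w. \<not> W \<subseteq> vec.span {w}"
  obtains x \<mu> where "x \<in> W" "norm x = 1" "cinner x (Jmap x) = 0" "\<mu> \<le> 0"
    "A *v x = complex_of_real \<mu> *s x"
proof -
  have "W \<noteq> {0}"
    using not_line[of 0] by auto
  then obtain x where x: "x \<in> W" "norm x = 1"
    and max: "\<And>y. y \<in> W \<Longrightarrow> quad_form A y \<le> quad_form A x * (norm y)\<^sup>2"
    using quad_form_max_on_subspace[OF W] by blast
  define M where "M = quad_form A x"
  have eig: "A *v x = complex_of_real M *s x"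
    unfolding M_def using hermitian W A_W x max by (rule quad_form_max_eigenvector)
  have "- M \<le> M"
    using max[OF J_W[OF x(1)]] x(2) by (simp add: quad_form_Jmap M_def)
  then consider "M > 0" | "M = 0"
    by linarith
  then show ?thesis
  proof cases
    case 1
    have eig_J: "A *v Jmap x = complex_of_real (- M) *s Jmap x"
      by (rule eigenvector_Jmap[OF eig])
    have "complex_of_real M * cinner (Jmap x) x = cinner (Jmap x) (A *v x)"
      by (simp add: eig cinner_scale_right)
    also have "\<dots> = - complex_of_real M * cinner (Jmap x) x"
      by (simp add: cinner_hermitian[OF hermitian, symmetric] eig_J cinner_scale_left cinner_minus_left)
    finally have "cinner (Jmap x) (Jmap (Jmap x)) = 0"
      using 1 by simp
    with 1 eig_J x show ?thesis
      by (intro that[of "Jmap x" "- M"]) (simp_all add: J_W)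
  next
    case 2
    have form_0: "quad_form A y = 0" if "y \<in> W" for y
      using max[OF that] max[OF J_W[OF that]] 2 by (simp add: quad_form_Jmap M_def)
    obtain y where y: "y \<in> W" "norm y = 1" "cinner y (Jmap y) = 0"
      using exists_unit_orthogonal_to_Jmap[OF W J_W not_line] by blast
    have "quad_form A z \<le> quad_form A y * (norm z)\<^sup>2" if "z \<in> W" for z
      using form_0[OF that] form_0[OF y(1)] by simp
    then have "A *v y = complex_of_real (quad_form A y) *s y"
      using hermitian W A_W y(1,2) quad_form_max_eigenvector by blast
    with y form_0 show ?thesis
      by (intro that[of y 0]) simp_all
  qed
qed

lemma Jmap_ker_mat: "v \<in> ker_mat A \<Longrightarrow> Jmap v \<in> ker_mat A"
  by (simp add: ker_mat_def anticommutes_Jmap)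

lemma Jpair_eigenvector:
  assumes "\<forall>j\<in>I. \<exists>\<mu>::real. A *v x j = complex_of_real \<mu> *s x j" "p \<in> I <+> I"
  shows "\<exists>\<mu>::real. A *v Jpair x p = complex_of_real \<mu> *s Jpair x p"
proof (cases p)
  case (Inl j)
  then show ?thesis
    using assms by auto
next
  case (Inr j)
  then obtain \<mu> :: real where "A *v x j = complex_of_real \<mu> *s x j"
    using assms by auto
  from eigenvector_Jmap[OF this] Inr show ?thesis
    by (metis Jpair_simps(2))
qed

lemma exists_J_orthonormal_nonpos_eigenvectors:
  fixes S :: "'n set"
  assumes "finite S"
  shows "\<exists>x. orthonormal_on (Jpair x) (S <+> S)
    \<and> (\<forall>j\<in>S. \<exists>\<mu>::real. \<mu> \<le> 0 \<and> A *v x j = complex_of_real \<mu> *s x j)"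
  using assms
proof (induction S rule: finite_induct)
  case empty
  show ?case
    by (simp add: orthonormal_on_def ball_Plus)
next
  case (insert a F)
  then obtain x where ON: "orthonormal_on (Jpair x) (F <+> F)"
    and eig: "\<forall>j\<in>F. \<exists>\<mu>::real. \<mu> \<le> 0 \<and> A *v x j = complex_of_real \<mu> *s x j"
    by blast
  define W where "W = orth_compl (Jpair x ` (F <+> F))"
  have "card F < CARD('n)"
    using insert(2) by (intro psubset_card_mono) auto
  then have "card (F <+> F) + 2 \<le> CARD('n + 'n)"
    using insert(1) by (simp add: card_Plus flip: UNIV_Plus_UNIV)
  then have not_line: "\<not> W \<subseteq> vec.span {w}" for w
    unfolding W_def using insert(1) ON by (intro orth_compl_not_subset_line) auto
  have W: "vec.subspace W"
    unfolding W_def by (rule subspace_orth_compl)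
  have A_W: "A *v v \<in> W" if "v \<in> W" for v
    unfolding W_def using hermitian Jpair_eigenvector[of F x] eig that[unfolded W_def]
    by (intro orth_compl_invariant_eigenvectors) blast+
  have J_W: "Jmap v \<in> W" if "v \<in> W" for v
    unfolding W_def using Jmap_Jpair_image that[unfolded W_def] by (rule orth_compl_invariant_Jmap)
  obtain v \<mu> where v: "v \<in> W" "norm v = 1" "cinner v (Jmap v) = 0"
    and \<mu>: "\<mu> \<le> 0" "A *v v = complex_of_real \<mu> *s v"
    using exists_nonpos_eigenvector_orthogonal_to_Jmap[OF W A_W J_W not_line]
    unfolding W_def by blast
  have "orthonormal_on (Jpair (x(a := v))) (insert a F <+> insert a F)"
    using ON insert(2) v unfolding W_def by (rule orthonormal_on_Jpair_insert)
  moreover have "\<forall>j\<in>insert a F. \<exists>\<mu>::real. \<mu> \<le> 0 \<and> A *v (x(a := v)) j = complex_of_real \<mu> *s (x(a := v)) j"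
    using eig \<mu> insert(2) by auto
  ultimately show ?case
    by blast
qed

lemma ker_mat_J_orthonormal_basis:
  fixes x :: "'n \<Rightarrow> complex^('n + 'n)"
  assumes ON: "orthonormal_on (Jpair x) UNIV"
    and eig: "\<forall>j. \<exists>\<mu>::real. A *v x j = complex_of_real \<mu> *s x j"
  obtains l kp where "vec.dim (ker_mat A) = 2 * l" "orthonormal_on (J_extend kp l) {..<2 * l}"
    "vec.span (J_extend kp l ` {..<2 * l}) = ker_mat A"
proof -
  define Z where "Z = {j. A *v x j = 0}"
  have "A *v Jpair x p = 0 \<longleftrightarrow> p \<in> Z <+> Z" for p
    by (cases p) (auto simp: Z_def anticommutes_Jmap)
  then have "{p \<in> UNIV. A *v Jpair x p = 0} = Z <+> Z"
    by auto
  moreover have "vec.span (range (Jpair x)) = UNIV"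
    using ON by (intro span_orthonormal_on_UNIV) auto
  ultimately have ker: "ker_mat A = vec.span (Jpair x ` (Z <+> Z))"
    using ker_mat_eq_span_null_basis[OF hermitian _ ON] Jpair_eigenvector[of UNIV x] eig by force
  define l where "l = card Z"
  obtain e where e: "bij_betw e {..<l} Z"
    unfolding l_def using ex_bij_betw_nat_finite[of Z] by (auto simp: lessThan_atLeast0)
  define \<iota> where "\<iota> k = (if k < l then Inl (e k) else Inr (e (k - l)))" for k
  have \<iota>: "bij_betw \<iota> {..<2 * l} (Z <+> Z)"
    unfolding \<iota>_def by (rule bij_betw_split_Plus[OF e])
  have b: "J_extend (x \<circ> e) l = Jpair x \<circ> \<iota>"
    by (auto simp: J_extend_def \<iota>_def)
  have "orthonormal_on (Jpair x \<circ> \<iota>) {..<2 * l}"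
    using ON \<iota> by (intro orthonormal_on_compose) (auto simp: bij_betw_def)
  moreover have span: "vec.span ((Jpair x \<circ> \<iota>) ` {..<2 * l}) = ker_mat A"
    unfolding image_comp[symmetric] using \<iota> by (simp add: ker bij_betw_def)
  moreover have "vec.dim (ker_mat A) = 2 * l"
    using dim_span_orthonormal_on[OF _ calculation(1)] by (simp only: span) simp
  ultimately show ?thesis
    by (intro that[of l "x \<circ> e"]) (simp_all only: b)
qed

lemma J_eigenbasis:
  obtains x :: "'n \<Rightarrow> complex^('n + 'n)" where "orthonormal_on (Jpair x) UNIV"
    "vec.span (range (Jpair x)) = UNIV"
    "\<forall>j. \<exists>\<mu>::real. \<mu> \<le> 0 \<and> A *v x j = complex_of_real \<mu> *s x j"
    "\<forall>p. \<exists>\<mu>. A *v Jpair x p = \<mu> *s Jpair x p"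
proof -
  obtain x :: "'n \<Rightarrow> complex^('n + 'n)" where ON: "orthonormal_on (Jpair x) UNIV"
    and eig: "\<forall>j. \<exists>\<mu>::real. \<mu> \<le> 0 \<and> A *v x j = complex_of_real \<mu> *s x j"
    using exists_J_orthonormal_nonpos_eigenvectors[of "UNIV :: 'n set"] by auto
  moreover have "vec.span (range (Jpair x)) = UNIV"
    using ON by (intro span_orthonormal_on_UNIV) auto
  moreover have "\<exists>\<mu>::real. A *v Jpair x p = complex_of_real \<mu> *s Jpair x p" for p
    using Jpair_eigenvector[of UNIV x p] eig by auto
  then have "\<forall>p. \<exists>\<mu>. A *v Jpair x p = \<mu> *s Jpair x p"
    by blast
  ultimately show ?thesis
    using that by blast
qed

lemma ker_mat_structure:
  fixes x :: "'n \<Rightarrow> complex^('n + 'n)"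
  assumes ON: "orthonormal_on (Jpair x) UNIV"
    and eig: "\<forall>j. \<exists>\<mu>::real. A *v x j = complex_of_real \<mu> *s x j"
  shows "\<exists>l::nat. vec.dim (ker_mat A) = 2 * l
        \<and> (\<exists>y :: nat \<Rightarrow> complex ^ ('n + 'n).
              (\<forall>k < 2 * l. y k \<in> ker_mat A \<and> y k \<noteq> 0 \<and> Jmap (y k) = y k)
            \<and> (\<forall>j < 2 * l. \<forall>k < 2 * l. j \<noteq> k \<longrightarrow> cinner (y j) (y k) = 0)
            \<and> vec.independent (y ` {..<2 * l})
            \<and> vec.span (y ` {..<2 * l}) = ker_mat A)
        \<and> (\<exists>kp :: nat \<Rightarrow> complex ^ ('n + 'n).
             let b = (\<lambda>k. if k < l then kp k else Jmap (kp (k - l))) in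
              (\<forall>k < 2 * l. b k \<in> ker_mat A)
            \<and> (\<forall>j < 2 * l. \<forall>k < 2 * l. cinner (b j) (b k) = (if j = k then 1 else 0))
            \<and> vec.span (b ` {..<2 * l}) = ker_mat A)"
proof -
  obtain l kp where dim: "vec.dim (ker_mat A) = 2 * l"
    and ON_ker: "orthonormal_on (J_extend kp l) {..<2 * l}"
    and span_ker: "vec.span (J_extend kp l ` {..<2 * l}) = ker_mat A"
    using ker_mat_J_orthonormal_basis[OF ON eig] .
  have span_y: "vec.span (J_fixed_of kp ` {..<2 * l}) = ker_mat A"
    using span_ker by (simp add: span_J_fixed_of)
  have y_ker: "J_fixed_of kp k \<in> ker_mat A" if "k < 2 * l" for k
    unfolding span_y[symmetric] using that by (auto intro: vec.span_base)
  have b_ker: "J_extend kp l k \<in> ker_mat A" if "k < 2 * l" for k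
    unfolding span_ker[symmetric] using that by (auto intro: vec.span_base)
  have y_orth: "cinner (J_fixed_of kp j) (J_fixed_of kp k) = 0" if "j < 2 * l" "k < 2 * l" "j \<noteq> k"
    for j k
    using cinner_J_fixed_of[OF ON_ker that(1,2)] that(3) by simp
  have y_nonzero: "J_fixed_of kp k \<noteq> 0" if "k < 2 * l" for k
    using cinner_J_fixed_of[OF ON_ker that that] by auto
  have "vec.independent (J_fixed_of kp ` {..<2 * l})"
    using y_orth y_nonzero by (intro pairwise_orthogonal_independent) auto
  moreover have "J_extend kp l = (\<lambda>k. if k < l then kp k else Jmap (kp (k - l)))"
    by (simp add: fun_eq_iff J_extend_def)
  ultimately show ?thesis
    using dim y_ker y_nonzero Jmap_J_fixed_of y_orth span_y b_ker ON_ker span_ker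
    unfolding Let_def orthonormal_on_def
    by (intro exI[of _ l] conjI exI[of _ "J_fixed_of kp"] exI[of _ kp]) auto
qed

end

theorem mainTheorem8:
  fixes H :: "complex ^ ('n::finite + 'n) ^ ('n + 'n)"
  assumes "hermitian_mat H"
  shows "(\<forall>x \<in> ker_mat (minus_part H). Jmap x \<in> ker_mat (minus_part H))
    \<and> (\<exists>l::nat. vec.dim (ker_mat (minus_part H)) = 2 * l
        \<and> (\<exists>y :: nat \<Rightarrow> complex ^ ('n + 'n).
              (\<forall>k < 2 * l. y k \<in> ker_mat (minus_part H) \<and> y k \<noteq> 0 \<and> Jmap (y k) = y k)
            \<and> (\<forall>j < 2 * l. \<forall>k < 2 * l. j \<noteq> k \<longrightarrow> cinner (y j) (y k) = 0)
            \<and> vec.independent (y ` {..<2 * l})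
            \<and> vec.span (y ` {..<2 * l}) = ker_mat (minus_part H))
        \<and> (\<exists>kp :: nat \<Rightarrow> complex ^ ('n + 'n).
             let b = (\<lambda>k. if k < l then kp k else Jmap (kp (k - l))) in
              (\<forall>k < 2 * l. b k \<in> ker_mat (minus_part H))
            \<and> (\<forall>j < 2 * l. \<forall>k < 2 * l. cinner (b j) (b k) = (if j = k then 1 else 0))
            \<and> vec.span (b ` {..<2 * l}) = ker_mat (minus_part H)))
    \<and> (\<exists>x :: 'n \<Rightarrow> complex ^ ('n + 'n).
         let b = (\<lambda>p. case p of Inl j \<Rightarrow> x j | Inr j \<Rightarrow> Jmap (x j)) in
           (\<forall>p q. cinner (b p) (b q) = (if p = q then 1 else 0))
         \<and> vec.span (range b) = UNIV
         \<and> (\<forall>p. \<exists>\<mu>::complex. minus_part H *v b p = \<mu> *s b p)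
         \<and> (\<forall>j. \<exists>\<mu>::real. \<mu> \<le> 0 \<and> minus_part H *v x j = complex_of_real \<mu> *s x j))"
proof -
  interpret J_anticommuting_hermitian "minus_part H"
    using assms by unfold_locales (simp_all add: hermitian_minus_part minus_part_Jmap)
  obtain x :: "'n \<Rightarrow> complex^('n + 'n)" where ON: "orthonormal_on (Jpair x) UNIV"
    and span: "vec.span (range (Jpair x)) = UNIV"
    and eig: "\<forall>j. \<exists>\<mu>::real. \<mu> \<le> 0 \<and> minus_part H *v x j = complex_of_real \<mu> *s x j"
    and eig_pairs: "\<forall>p. \<exists>\<mu>. minus_part H *v Jpair x p = \<mu> *s Jpair x p"
    by (rule J_eigenbasis)
  have "\<forall>j. \<exists>\<mu>::real. minus_part H *v x j = complex_of_real \<mu> *s x j"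
    using eig by blast
  note kernel = ker_mat_structure[OF ON this]
  have Jpair_eq: "Jpair x = (\<lambda>p. case p of Inl j \<Rightarrow> x j | Inr j \<Rightarrow> Jmap (x j))"
    by (simp add: fun_eq_iff Jpair_def)
  show ?thesis
    unfolding Let_def
    apply (intro conjI)
    subgoal
      using Jmap_ker_mat by blast
    subgoal
      using kernel unfolding Let_def .
    subgoal
      using ON span eig_pairs eig
      by (intro exI[of _ x]) (auto simp: orthonormal_on_def Jpair_eq)
    done
qed

end
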